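(* Let $\omega\ge1$ and $\Lambda\ge2\omega-1$ be integers, $P,\sigma^2>0$, $\textsf{snr}=P/\sigma^2$, $\kappa=\frac{\Lambda+\omega-1}{\Lambda}$, and $0<R<\frac{1}{2\kappa}\ln(1+\kappa\,\textsf{snr})$. Consider the asymptotic state evolution in the context. Then: (1) If $\omega>\big(\frac{1}{e^{2R\kappa}-1}-\frac{1}{\kappa\,\textsf{snr}}\big)^{-1}$, then $\bar\psi^1_1=\bar\psi^1_\Lambda=0$. (2) Let $X=\omega\cdot\frac{1+\kappa\,\textsf{snr}}{(\kappa\,\textsf{snr})^2}\big[\ln(1+\kappa\,\textsf{snr})-2R\kappa\big]$. For every integer $c$ with $1\le c\le\omega-1$ and $c<X$, $\bar\psi^1_c=\bar\psi^1_{\Lambda+1-c}=0$. (3) If for some integer $c_0$ with $1\le c_0\le\omega-1$ one has $\bar\psi^1_c=0$ for all $c\le c_0$ and all $c\ge\Lambda+1-c_0$, then for every $t\ge1$, $\bar\psi^t_c=0$ for all $c\in[\Lambda]$ with $\min(c,\Lambda+1-c)\le tc_0$; in particular $\bar\psi^t_c=0$ for all $c\in[\Lambda]$ once $t\ge\lceil\Lambda/(2c_0)\rceil$.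
   Context: Asymptotic state evolution for an $(\omega,\Lambda)$ base matrix (rates in nats): initialize $\bar\psi^0_c=1$ for $c\in[\Lambda]$; for $t=0,1,2,\dots$, $$\bar\phi^t_r=\sigma^2\Big(1+\frac{\kappa\,\textsf{snr}}{\omega}\sum_{c=\underline c_r}^{\overline c_r}\bar\psi^t_c\Big),\quad r\in[\Lambda+\omega-1],$$ $$\bar\psi^{t+1}_c=1-\mathbf 1\Big\{\frac{P}{\omega}\sum_{r=c}^{c+\omega-1}\frac{1}{\bar\phi^t_r}>2R\Big\},\quad c\in[\Lambda],$$ where $\underline c_r=\max\{1,r-\omega+1\}$ and $\overline c_r=\min\{r,\Lambda\}$. (This corresponds to the base matrix with $L_R=\Lambda+\omega-1$ rows, $L_C=\Lambda$ columns, $W_{rc}=P\frac{\Lambda+\omega-1}{\omega}$ if $c\le r\le c+\omega-1$ and $0$ otherwise; $\bar\psi^t_c=0$ means column block $c$ is decoded at iteration $t$.) *)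

theory Defs
  imports Complex_Main
begin

text \<open>Parameters: om = omega, La = Lambda, P, s2 = sigma^2, R (rate in nats).
  snr = P / s2,  kappa = (La + om - 1) / La.
  Column index c ranges over {1..La}, row index r over {1..La+om-1}.\<close>

definition se_snr :: "real \<Rightarrow> real \<Rightarrow> real" where
  "se_snr P s2 = P / s2"

definition se_kappa :: "nat \<Rightarrow> nat \<Rightarrow> real" where
  "se_kappa om La = (real La + real om - 1) / real La"

text \<open>The lower summation bound max 1 (r - om + 1) is written max 1 (r + 1 - om),
  which is the same thing with truncated natural subtraction.\<close>
definition se_phi :: "nat \<Rightarrow> nat \<Rightarrow> real \<Rightarrow> real \<Rightarrow> (nat \<Rightarrow> real) \<Rightarrow> nat \<Rightarrow> real" where
  "se_phi om La P s2 psi r =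
     s2 * (1 + se_kappa om La * se_snr P s2 / real om *
              (\<Sum>c = max 1 (r + 1 - om) .. min r La. psi c))"

primrec se_psi :: "nat \<Rightarrow> nat \<Rightarrow> real \<Rightarrow> real \<Rightarrow> real \<Rightarrow> nat \<Rightarrow> nat \<Rightarrow> real" where
  "se_psi om La P s2 R 0 = (\<lambda>c. 1)"
| "se_psi om La P s2 R (Suc t) =
     (\<lambda>c. 1 - (if P / real om * (\<Sum>r = c .. c + om - 1. 1 / se_phi om La P s2 (se_psi om La P s2 R t) r) > 2 * R
               then 1 else 0))"

end

(*
  At iteration 1 the decoding statistic of a column within \<omega> of an end is a Riemann sum of
  b / (1 + b m) with b = \<kappa> snr / \<omega> (see edge_gain); concavity of ln bounds it below by a
  difference of logarithms, and comparing that bound with 2R\<kappa> gives (1) and (2).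

  For (3), the statistic only grows when row loads shrink. If every column within distance
  T of an end is decoded at iteration t, then column c + S (S \<le> T) sees at iteration t no more
  load than column c saw at iteration 0, because the decoded columns act as a new boundary.
  Hence the columns decoded at iteration 1 within c0 of the ends are reproduced c0 further
  inside at every iteration, and the decoded region grows by c0 at each end per iteration.
*)

theory Submission
  imports Defs
begin

section \<open>Logarithmic estimates\<close>

lemma ln_add_diff_le:
  fixes x h :: real
  assumes "0 < 1 + x" "0 \<le> h"
  shows "ln (1 + x + h) - ln (1 + x) \<le> h / (1 + x)"
proof -
  have "ln (1 + x + h) - ln (1 + x) = ln ((1 + x + h) / (1 + x))"
    using assms by (simp add: ln_div)
  also have "\<dots> \<le> (1 + x + h) / (1 + x) - 1"
    using assms by (intro ln_le_minus_one) simp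
  also have "\<dots> = h / (1 + x)"
    using assms by (simp add: field_simps)
  finally show ?thesis .
qed

lemma ln_diff_le_sum:
  fixes b x :: real and n :: nat
  assumes "0 \<le> b" "0 \<le> x"
  shows "ln (1 + b * (x + n)) - ln (1 + b * x) \<le> (\<Sum>j<n. b / (1 + b * (x + real j)))"
proof (induction n)
  case 0
  show ?case by simp
next
  case (Suc n)
  have "ln (1 + b * (x + Suc n)) - ln (1 + b * (x + n)) \<le> b / (1 + b * (x + n))"
    using ln_add_diff_le[of "b * (x + n)" b] assms by (simp add: algebra_simps add_pos_nonneg)
  with Suc show ?case by simp
qed

text \<open>If La \<ge> 2 om - 1, at iteration 0 the rows c + j (j < om) of a column c \<le> om hold
  min (c + j) om columns, so with b = \<kappa> snr / om its decoding test reads 2 R \<kappa> < edge_gain b om c.\<close>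

definition edge_gain :: "real \<Rightarrow> nat \<Rightarrow> nat \<Rightarrow> real" where
  "edge_gain b om c = (\<Sum>j<om. b / (1 + b * real (min (c + j) om)))"

lemma edge_gain_first_ge:
  assumes "0 \<le> b"
  shows "ln (1 + b * (om + 1)) - ln (1 + b) \<le> edge_gain b om 1"
  using ln_diff_le_sum[OF assms, of 1 om]
  by (simp add: edge_gain_def add.commute)

lemma edge_gain_ge:
  assumes b: "0 \<le> b" and c: "c \<le> om"
  shows "ln (1 + b * om) - ln (1 + b * c) + b * c / (1 + b * om) \<le> edge_gain b om c"
proof -
  define n where "n = om - c"
  have om: "om = c + n" using c by (simp add: n_def)
  have "edge_gain b om c = (\<Sum>j<n. b / (1 + b * (c + j))) + (\<Sum>j\<in>{n..<om}. b / (1 + b * om))"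
    unfolding edge_gain_def lessThan_atLeast0 om
    by (subst sum.atLeastLessThan_concat[of 0 n, symmetric]) (auto intro!: sum.cong)
  also have "(\<Sum>j\<in>{n..<om}. b / (1 + b * om)) = b * c / (1 + b * om)"
    by (simp add: om)
  finally show ?thesis
    using ln_diff_le_sum[OF b, of c n] by (simp add: om)
qed

lemma first_column_threshold:
  fixes a w y :: real
  assumes a: "0 < a" and w: "0 < w" and y: "0 < y" "y < ln (1 + a)"
    and thr: "w > 1 / (1 / (exp y - 1) - 1 / a)"
  shows "y < ln (1 + a / w * (w + 1)) - ln (1 + a / w)"
proof -
  define E where "E = exp y - 1"
  have "exp y < exp (ln (1 + a))"
    using y(2) by simp
  then have E: "0 < E" "E < a"
    using y(1) a by (simp_all add: E_def)
  have "1 < w * (1 / E - 1 / a)"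
    using thr E a by (simp add: E_def[symmetric] field_simps)
  then have "E * (w + a) < a * w"
    using E a by (simp add: field_simps)
  then have "exp y * (w + a) < w + a * (w + 1)"
    by (simp add: E_def algebra_simps)
  then have "exp y < (w + a * (w + 1)) / (w + a)"
    using w a by (simp add: pos_less_divide_eq)
  also have "\<dots> = ((w + a * (w + 1)) / w) / ((w + a) / w)"
    using w by simp
  also have "\<dots> = (1 + a / w * (w + 1)) / (1 + a / w)"
    using w by (simp add: add_divide_distrib)
  finally have "exp y < (1 + a / w * (w + 1)) / (1 + a / w)" .
  then have "y < ln ((1 + a / w * (w + 1)) / (1 + a / w))"
    by (metis exp_gt_zero ln_exp ln_less_cancel_iff order.strict_trans)
  moreover have "0 < 1 + a / w * (w + 1)" "0 < 1 + a / w"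
    using w a by (simp_all add: add_pos_pos)
  ultimately show ?thesis
    by (simp add: ln_div)
qed

lemma boundary_column_threshold:
  fixes a w x y :: real
  assumes a: "0 < a" and w: "0 < w" and x: "0 \<le> x"
    and thr: "x < w * (1 + a) / a\<^sup>2 * (ln (1 + a) - y)"
  shows "y < ln (1 + a) - ln (1 + a / w * x) + a / w * x / (1 + a)"
proof -
  have "ln (1 + a / w * x) \<le> a / w * x"
    using a w x by (intro ln_add_one_self_le_self) simp
  moreover have "a / w * x - a / w * x / (1 + a) < ln (1 + a) - y"
  proof -
    have "a / w * x - a / w * x / (1 + a) = x / (w * (1 + a) / a\<^sup>2)"
      using a w by (simp add: divide_simps power2_eq_square) (simp add: algebra_simps)
    also have "\<dots> < ln (1 + a) - y"
      using thr a w by (simp add: pos_divide_less_eq pos_less_divide_eq mult.commute)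
    finally show ?thesis .
  qed
  ultimately show ?thesis by linarith
qed

section \<open>Row loads and the decoding test\<close>

lemma se_kappa_pos: "1 \<le> om \<Longrightarrow> 1 \<le> La \<Longrightarrow> 0 < se_kappa om La"
  by (simp add: se_kappa_def)

lemma se_phi_coeff_nonneg: "1 \<le> om \<Longrightarrow> 0 \<le> P \<Longrightarrow> 0 < s2 \<Longrightarrow> 0 \<le> se_kappa om La * se_snr P s2 / om"
  by (simp add: se_kappa_def se_snr_def)

definition row_load :: "nat \<Rightarrow> nat \<Rightarrow> (nat \<Rightarrow> real) \<Rightarrow> nat \<Rightarrow> real" where
  "row_load om La psi r = (\<Sum>c = max 1 (r + 1 - om) .. min r La. psi c)"

lemma se_phi_row_load:
  "se_phi om La P s2 psi r = s2 * (1 + se_kappa om La * se_snr P s2 / om * row_load om La psi r)"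
  by (simp add: se_phi_def row_load_def)

lemma row_load_ones: "row_load om La (\<lambda>_. 1) r = real (min r La + 1 - max 1 (r + 1 - om))"
  by (simp add: row_load_def)

lemma row_load_nonneg: "(\<And>c. 0 \<le> psi c) \<Longrightarrow> 0 \<le> row_load om La psi r"
  unfolding row_load_def by (rule sum_nonneg)

lemma row_load_le_if_zero_upto:
  assumes "\<And>c. c \<in> {1..La} \<Longrightarrow> c \<le> S \<Longrightarrow> psi c = 0" and "\<And>c. psi c \<le> 1"
  shows "row_load om La psi r \<le> real (min r La + 1 - max (S + 1) (r + 1 - om))"
proof -
  let ?I = "{max 1 (r + 1 - om) .. min r La}"
  have "row_load om La psi r = (\<Sum>c\<in>?I. if S < c then psi c else 0)"
    unfolding row_load_def by (rule sum.cong) (auto intro: assms(1))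
  also have "\<dots> \<le> (\<Sum>c\<in>?I. if S < c then 1 else 0)"
    by (rule sum_mono) (auto intro: assms(2))
  also have "?I \<inter> {c. S < c} = {max (S + 1) (r + 1 - om) .. min r La}"
    by auto
  then have "(\<Sum>c\<in>?I. if S < c then 1 else 0) = real (min r La + 1 - max (S + 1) (r + 1 - om))"
    by (simp add: sum.If_cases)
  finally show ?thesis .
qed

lemma row_load_le_if_zero_from:
  assumes "\<And>c. c \<in> {1..La} \<Longrightarrow> La - S < c \<Longrightarrow> psi c = 0" and "\<And>c. psi c \<le> 1"
  shows "row_load om La psi r \<le> real (min r (La - S) + 1 - max 1 (r + 1 - om))"
proof -
  let ?I = "{max 1 (r + 1 - om) .. min r La}"
  have "row_load om La psi r = (\<Sum>c\<in>?I. if c \<le> La - S then psi c else 0)"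
    unfolding row_load_def by (rule sum.cong) (auto intro: assms(1))
  also have "\<dots> \<le> (\<Sum>c\<in>?I. if c \<le> La - S then 1 else 0)"
    by (rule sum_mono) (auto intro: assms(2))
  also have "?I \<inter> {c. c \<le> La - S} = {max 1 (r + 1 - om) .. min r (La - S)}"
    by auto
  then have "(\<Sum>c\<in>?I. if c \<le> La - S then 1 else 0) = real (min r (La - S) + 1 - max 1 (r + 1 - om))"
    by (simp add: sum.If_cases)
  finally show ?thesis .
qed

lemma row_load_ones_left_edge:
  assumes "2 * om - 1 \<le> La" "1 \<le> c" "c \<le> om" "j < om"
  shows "row_load om La (\<lambda>_. 1) (c + j) = real (min (c + j) om)"
  using assms unfolding row_load_ones by (simp add: min_def max_def) arith

lemma row_load_ones_right_edge:
  assumes "2 * om - 1 \<le> La" "1 \<le> c" "c \<le> om" "j < om"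
  shows "row_load om La (\<lambda>_. 1) (La + 1 - c + j) = real (min (c + (om - Suc j)) om)"
  using assms unfolding row_load_ones by (simp add: min_def max_def) arith

lemma se_phi_pos:
  assumes "1 \<le> om" "0 \<le> P" "0 < s2" "\<And>c. 0 \<le> psi c"
  shows "0 < se_phi om La P s2 psi r"
proof -
  have "0 \<le> se_kappa om La * se_snr P s2 / om * row_load om La psi r"
    using assms se_phi_coeff_nonneg row_load_nonneg by (intro mult_nonneg_nonneg) auto
  then show ?thesis
    unfolding se_phi_row_load using assms(3) by simp
qed

lemma se_phi_mono:
  assumes "1 \<le> om" "0 \<le> P" "0 < s2" "row_load om La psi r \<le> row_load om La psi' r'"
  shows "se_phi om La P s2 psi r \<le> se_phi om La P s2 psi' r'"
proof -
  have "se_kappa om La * se_snr P s2 / om * row_load om La psi r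
      \<le> se_kappa om La * se_snr P s2 / om * row_load om La psi' r'"
    using assms se_phi_coeff_nonneg by (intro mult_left_mono) auto
  then show ?thesis
    unfolding se_phi_row_load using assms(3) by simp
qed

lemma se_psi_zero_or_one: "se_psi om La P s2 R t c \<in> {0, 1}"
  by (cases t) auto

lemma se_psi_nonneg: "0 \<le> se_psi om La P s2 R t c"
  using se_psi_zero_or_one[of om La P s2 R t c] by auto

lemma se_psi_le_one: "se_psi om La P s2 R t c \<le> 1"
  using se_psi_zero_or_one[of om La P s2 R t c] by auto

lemma sum_window:
  fixes f :: "nat \<Rightarrow> 'a::comm_monoid_add"
  assumes "1 \<le> om"
  shows "(\<Sum>r = c .. c + om - 1. f r) = (\<Sum>j<om. f (c + j))"
proof -
  have "{c .. c + om - 1} = {c ..< c + om}"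
    using assms by auto
  then show ?thesis
    by (simp add: sum.atLeastLessThan_shift_0[of _ c] lessThan_atLeast0)
qed

lemma se_psi_Suc_eq_0_iff:
  assumes "1 \<le> om"
  shows "se_psi om La P s2 R (Suc t) c = 0 \<longleftrightarrow>
    2 * R < P / om * (\<Sum>j<om. 1 / se_phi om La P s2 (se_psi om La P s2 R t) (c + j))"
  by (simp only: se_psi.simps sum_window[OF assms]) simp

lemma se_psi_Suc_eq_0_if_row_loads_le:
  assumes om: "1 \<le> om" and P: "0 < P" and s2: "0 < s2"
    and loads: "\<And>j. j < om \<Longrightarrow>
      row_load om La (se_psi om La P s2 R t) (c + j) \<le> row_load om La (se_psi om La P s2 R s) (c' + j)"
    and decoded: "se_psi om La P s2 R (Suc s) c' = 0"
  shows "se_psi om La P s2 R (Suc t) c = 0"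
proof -
  let ?phi = "\<lambda>t r. se_phi om La P s2 (se_psi om La P s2 R t) r"
  have "1 / ?phi s (c' + j) \<le> 1 / ?phi t (c + j)" if "j < om" for j
    using om P s2 se_psi_nonneg
    by (intro divide_left_mono se_phi_mono loads that mult_pos_pos se_phi_pos) auto
  then have "P / om * (\<Sum>j<om. 1 / ?phi s (c' + j)) \<le> P / om * (\<Sum>j<om. 1 / ?phi t (c + j))"
    using P by (intro mult_left_mono sum_mono) auto
  with decoded show ?thesis
    unfolding se_psi_Suc_eq_0_iff[OF om] by linarith
qed

section \<open>Growth of the decoded region\<close>

lemma se_psi_Suc_eq_0_left_front:
  assumes om: "1 \<le> om" and P: "0 < P" and s2: "0 < s2"
    and decoded: "se_psi om La P s2 R (Suc 0) c = 0"
    and front: "\<And>col. col \<in> {1..La} \<Longrightarrow> col \<le> S \<Longrightarrow> se_psi om La P s2 R t col = 0"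
  shows "se_psi om La P s2 R (Suc t) (c + S) = 0"
proof (rule se_psi_Suc_eq_0_if_row_loads_le[OF om P s2 _ decoded])
  fix j
  have "row_load om La (se_psi om La P s2 R t) (c + S + j)
      \<le> real (min (c + S + j) La + 1 - max (S + 1) (c + S + j + 1 - om))"
    using front se_psi_le_one by (rule row_load_le_if_zero_upto)
  also have "\<dots> \<le> real (min (c + j) La + 1 - max 1 (c + j + 1 - om))"
    by (simp add: min_def max_def) arith
  finally show "row_load om La (se_psi om La P s2 R t) (c + S + j)
      \<le> row_load om La (se_psi om La P s2 R 0) (c + j)"
    by (simp add: row_load_ones)
qed

lemma se_psi_Suc_eq_0_right_front:
  assumes om: "1 \<le> om" and P: "0 < P" and s2: "0 < s2"
    and decoded: "se_psi om La P s2 R (Suc 0) (c + S) = 0"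
    and front: "\<And>col. col \<in> {1..La} \<Longrightarrow> La - S < col \<Longrightarrow> se_psi om La P s2 R t col = 0"
  shows "se_psi om La P s2 R (Suc t) c = 0"
proof (rule se_psi_Suc_eq_0_if_row_loads_le[OF om P s2 _ decoded])
  fix j
  have "row_load om La (se_psi om La P s2 R t) (c + j)
      \<le> real (min (c + j) (La - S) + 1 - max 1 (c + j + 1 - om))"
    using front se_psi_le_one by (rule row_load_le_if_zero_from)
  also have "\<dots> \<le> real (min (c + S + j) La + 1 - max 1 (c + S + j + 1 - om))"
    by (simp add: min_def max_def) arith
  finally show "row_load om La (se_psi om La P s2 R t) (c + j)
      \<le> row_load om La (se_psi om La P s2 R 0) (c + S + j)"
    by (simp add: row_load_ones)
qed

lemma se_psi_Suc_eq_0_front_advance: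
  assumes om: "1 \<le> om" and P: "0 < P" and s2: "0 < s2" and c0: "1 \<le> c0"
    and init: "\<forall>c\<in>{1..La}. (c \<le> c0 \<or> c \<ge> La + 1 - c0) \<longrightarrow> se_psi om La P s2 R 1 c = 0"
    and front: "\<And>col. col \<in> {1..La} \<Longrightarrow> min col (La + 1 - col) \<le> T \<Longrightarrow> se_psi om La P s2 R t col = 0"
    and c: "c \<in> {1..La}" and near: "min c (La + 1 - c) \<le> T + c0"
  shows "se_psi om La P s2 R (Suc t) c = 0"
proof -
  consider "c \<le> T + c0" | "La + 1 - c \<le> T + c0"
    using near by linarith
  then show ?thesis
  proof cases
    case 1
    define S where "S = min (c - 1) T"
    have "c - S \<in> {1..La}" "c - S \<le> c0"
      using c c0 1 by (auto simp: S_def)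
    then have "se_psi om La P s2 R (Suc 0) (c - S) = 0"
      using init by simp
    then have "se_psi om La P s2 R (Suc t) (c - S + S) = 0"
      by (rule se_psi_Suc_eq_0_left_front[OF om P s2]) (rule front; auto simp: S_def)
    then show ?thesis
      using c by (simp add: S_def)
  next
    case 2
    define S where "S = min (La - c) T"
    have "c + S \<in> {1..La}" "La + 1 - c0 \<le> c + S"
      using c c0 2 by (auto simp: S_def)
    then have "se_psi om La P s2 R (Suc 0) (c + S) = 0"
      using init by simp
    then show ?thesis
      by (rule se_psi_Suc_eq_0_right_front[OF om P s2]) (rule front; auto simp: S_def)
  qed
qed

lemma se_psi_eq_0_near_edges:
  assumes om: "1 \<le> om" and P: "0 < P" and s2: "0 < s2" and c0: "1 \<le> c0"
    and init: "\<forall>c\<in>{1..La}. (c \<le> c0 \<or> c \<ge> La + 1 - c0) \<longrightarrow> se_psi om La P s2 R 1 c = 0"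
    and t: "1 \<le> t" and c: "c \<in> {1..La}" and near: "min c (La + 1 - c) \<le> t * c0"
  shows "se_psi om La P s2 R t c = 0"
proof -
  have "\<forall>c\<in>{1..La}. min c (La + 1 - c) \<le> Suc n * c0 \<longrightarrow> se_psi om La P s2 R (Suc n) c = 0" for n
  proof (induction n)
    case 0
    show ?case using init by auto
  next
    case (Suc n)
    show ?case
    proof (intro ballI impI)
      fix c assume c: "c \<in> {1..La}" and near: "min c (La + 1 - c) \<le> Suc (Suc n) * c0"
      show "se_psi om La P s2 R (Suc (Suc n)) c = 0"
      proof (rule se_psi_Suc_eq_0_front_advance[OF om P s2 c0 init _ c])
        show "se_psi om La P s2 R (Suc n) col = 0"
          if "col \<in> {1..La}" "min col (La + 1 - col) \<le> Suc n * c0" for col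
          using Suc.IH that by blast
        show "min c (La + 1 - c) \<le> Suc n * c0 + c0"
          using near by simp
      qed
    qed
  qed
  with t c near show ?thesis
    by (cases t) auto
qed

lemma le_mult_if_ceiling_divide_le:
  fixes n d t :: nat
  assumes "0 < d" "\<lceil>real n / real d\<rceil> \<le> int t"
  shows "n \<le> t * d"
proof -
  have "real n / real d \<le> real t"
    using assms(2) by (simp add: ceiling_le_iff)
  then have "real n \<le> real (t * d)"
    using assms(1) by (simp add: divide_le_eq)
  then show ?thesis
    by linarith
qed

lemma se_psi_eq_0_all_columns:
  assumes om: "1 \<le> om" and P: "0 < P" and s2: "0 < s2" and c0: "1 \<le> c0"
    and init: "\<forall>c\<in>{1..La}. (c \<le> c0 \<or> c \<ge> La + 1 - c0) \<longrightarrow> se_psi om La P s2 R 1 c = 0"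
    and t: "La \<le> 2 * t * c0" and c: "c \<in> {1..La}"
  shows "se_psi om La P s2 R t c = 0"
proof (rule se_psi_eq_0_near_edges[OF om P s2 c0 init _ c])
  show "1 \<le> t" using t c by (cases t) auto
  show "min c (La + 1 - c) \<le> t * c0" using t c by (simp add: min_def) arith
qed

section \<open>The first iteration near the ends\<close>

lemma se_psi_1_edge_columns_eq_0:
  assumes om: "1 \<le> om" and La: "2 * om - 1 \<le> La"
    and c: "1 \<le> c" "c \<le> om"
    and gain: "2 * R * se_kappa om La < edge_gain (se_kappa om La * se_snr P s2 / om) om c"
  shows "se_psi om La P s2 R 1 c = 0 \<and> se_psi om La P s2 R 1 (La + 1 - c) = 0"
proof -
  define k where "k = se_kappa om La"
  define b where "b = k * se_snr P s2 / om"
  let ?g = "\<lambda>m::nat. 1 / (s2 * (1 + b * real m))"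
  have k: "0 < k"
    using om La by (simp add: k_def se_kappa_pos)
  have "P / om * (\<Sum>j<om. ?g (min (c + j) om)) * k = edge_gain b om c"
    unfolding edge_gain_def sum_distrib_left sum_distrib_right
    by (rule sum.cong) (simp_all add: b_def se_snr_def ac_simps)
  moreover have "2 * R * k < edge_gain b om c"
    using gain by (simp add: k_def b_def)
  ultimately have margin: "2 * R < P / om * (\<Sum>j<om. ?g (min (c + j) om))"
    using k by (metis mult_less_cancel_right_pos)
  have phi: "se_phi om La P s2 (\<lambda>_. 1) r = s2 * (1 + b * row_load om La (\<lambda>_. 1) r)" for r
    by (simp add: se_phi_row_load b_def k_def)
  have "(\<Sum>j<om. 1 / se_phi om La P s2 (se_psi om La P s2 R 0) (c + j)) = (\<Sum>j<om. ?g (min (c + j) om))"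
    using row_load_ones_left_edge[OF La c] by (intro sum.cong) (simp_all add: phi)
  moreover have "(\<Sum>j<om. 1 / se_phi om La P s2 (se_psi om La P s2 R 0) (La + 1 - c + j))
      = (\<Sum>j<om. ?g (min (c + (om - Suc j)) om))"
    using row_load_ones_right_edge[OF La c] by (intro sum.cong) (simp_all add: phi)
  moreover have "(\<Sum>j<om. ?g (min (c + (om - Suc j)) om)) = (\<Sum>j<om. ?g (min (c + j) om))"
    by (rule sum.nat_diff_reindex)
  ultimately show ?thesis
    unfolding One_nat_def se_psi_Suc_eq_0_iff[OF om] using margin by simp
qed

lemma se_rate_below_capacity:
  assumes "1 \<le> om" "1 \<le> La"
    and "R < 1 / (2 * se_kappa om La) * ln (1 + se_kappa om La * se_snr P s2)"
  shows "2 * R * se_kappa om La < ln (1 + se_kappa om La * se_snr P s2)"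
  using assms se_kappa_pos[of om La] by (simp add: field_simps)

lemma se_psi_1_first_last_eq_0:
  assumes om: "1 \<le> om" and La: "2 * om - 1 \<le> La" and P: "0 < P" and s2: "0 < s2"
    and R0: "0 < R" and R1: "R < 1 / (2 * se_kappa om La) * ln (1 + se_kappa om La * se_snr P s2)"
    and wide: "real om > 1 / (1 / (exp (2 * R * se_kappa om La) - 1) - 1 / (se_kappa om La * se_snr P s2))"
  shows "se_psi om La P s2 R 1 1 = 0 \<and> se_psi om La P s2 R 1 La = 0"
proof -
  define a where "a = se_kappa om La * se_snr P s2"
  have La1: "1 \<le> La" using om La by linarith
  have k: "0 < se_kappa om La" using om La1 by (rule se_kappa_pos)
  have a: "0 < a" using k P s2 by (simp add: a_def se_snr_def)
  have "2 * R * se_kappa om La < ln (1 + a / om * (real om + 1)) - ln (1 + a / om)"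
    using a om R0 k se_rate_below_capacity[OF om La1 R1] wide
    by (intro first_column_threshold) (simp_all add: a_def)
  also have "\<dots> \<le> edge_gain (a / om) om 1"
    using a by (intro edge_gain_first_ge) simp
  finally show ?thesis
    using se_psi_1_edge_columns_eq_0[OF om La order.refl om] by (simp add: a_def)
qed

lemma se_psi_1_eq_0_below_threshold:
  assumes om: "1 \<le> om" and La: "2 * om - 1 \<le> La" and P: "0 < P" and s2: "0 < s2"
    and c: "1 \<le> c" "c \<le> om"
    and below: "real c < real om * (1 + se_kappa om La * se_snr P s2) / (se_kappa om La * se_snr P s2)\<^sup>2
                 * (ln (1 + se_kappa om La * se_snr P s2) - 2 * R * se_kappa om La)"
  shows "se_psi om La P s2 R 1 c = 0 \<and> se_psi om La P s2 R 1 (La + 1 - c) = 0"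
proof -
  define a where "a = se_kappa om La * se_snr P s2"
  have La1: "1 \<le> La" using om La by linarith
  have a: "0 < a" using se_kappa_pos[OF om La1] P s2 by (simp add: a_def se_snr_def)
  have "2 * R * se_kappa om La < ln (1 + a) - ln (1 + a / om * c) + a / om * c / (1 + a)"
    using a om below by (intro boundary_column_threshold) (simp_all add: a_def)
  also have "\<dots> \<le> edge_gain (a / om) om c"
    using a om edge_gain_ge[of "a / om" c om] c by simp
  finally show ?thesis
    using se_psi_1_edge_columns_eq_0[OF om La c] by (simp add: a_def)
qed

theorem mainTheorem8:
  fixes om La :: nat and P s2 R :: real
  assumes om: "om \<ge> 1"
    and La: "La \<ge> 2 * om - 1"
    and P: "P > 0" and s2: "s2 > 0"
    and R0: "R > 0"
    and R1: "R < 1 / (2 * se_kappa om La) * ln (1 + se_kappa om La * se_snr P s2)"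
  shows
    "(real om > 1 / (1 / (exp (2 * R * se_kappa om La) - 1) - 1 / (se_kappa om La * se_snr P s2))
        \<longrightarrow> se_psi om La P s2 R 1 1 = 0 \<and> se_psi om La P s2 R 1 La = 0)
     \<and> (let X = real om * (1 + se_kappa om La * se_snr P s2) / (se_kappa om La * se_snr P s2)^2
                 * (ln (1 + se_kappa om La * se_snr P s2) - 2 * R * se_kappa om La)
        in \<forall>c::nat. 1 \<le> c \<and> c \<le> om - 1 \<and> real c < X \<longrightarrow>
              se_psi om La P s2 R 1 c = 0 \<and> se_psi om La P s2 R 1 (La + 1 - c) = 0)
     \<and> (\<forall>c0::nat. 1 \<le> c0 \<and> c0 \<le> om - 1 \<and>
           (\<forall>c\<in>{1..La}. (c \<le> c0 \<or> c \<ge> La + 1 - c0) \<longrightarrow> se_psi om La P s2 R 1 c = 0)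
         \<longrightarrow> (\<forall>t\<ge>1. \<forall>c\<in>{1..La}. min c (La + 1 - c) \<le> t * c0 \<longrightarrow> se_psi om La P s2 R t c = 0)
           \<and> (\<forall>t::nat. int t \<ge> \<lceil>real La / (2 * real c0)\<rceil> \<longrightarrow>
                 (\<forall>c\<in>{1..La}. se_psi om La P s2 R t c = 0)))"
proof -
  have wave: "(\<forall>t\<ge>1. \<forall>c\<in>{1..La}. min c (La + 1 - c) \<le> t * c0 \<longrightarrow> se_psi om La P s2 R t c = 0)
      \<and> (\<forall>t::nat. int t \<ge> \<lceil>real La / (2 * real c0)\<rceil> \<longrightarrow> (\<forall>c\<in>{1..La}. se_psi om La P s2 R t c = 0))"
    if c0: "1 \<le> c0"
      and init: "\<forall>c\<in>{1..La}. (c \<le> c0 \<or> c \<ge> La + 1 - c0) \<longrightarrow> se_psi om La P s2 R 1 c = 0"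
    for c0 :: nat
  proof (intro conjI allI impI ballI)
    fix t c assume "1 \<le> t" "c \<in> {1..La}" "min c (La + 1 - c) \<le> t * c0"
    then show "se_psi om La P s2 R t c = 0"
      by (rule se_psi_eq_0_near_edges[OF om P s2 c0 init])
  next
    fix t c assume t: "int t \<ge> \<lceil>real La / (2 * real c0)\<rceil>" and c: "c \<in> {1..La}"
    have "La \<le> t * (2 * c0)"
      using c0 t by (intro le_mult_if_ceiling_divide_le) simp_all
    then show "se_psi om La P s2 R t c = 0"
      using c by (intro se_psi_eq_0_all_columns[OF om P s2 c0 init]) (simp_all add: ac_simps)
  qed
  show ?thesis
    unfolding Let_def
    using se_psi_1_first_last_eq_0[OF om La P s2 R0 R1] se_psi_1_eq_0_below_threshold[OF om La P s2] wave
    by (meson diff_le_self order_trans)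
qed

end
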